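(* Let $X$ be a bornological coarse space with bornology $\mathcal{B}$, and let $\bar X$ be a Higson-dominated compactification of $X$ with boundary $Y$. Suppose given a neighbourhood $U$ of $Y$ in $\bar X$ with a retraction $r\colon U\to Y$, a proper, bornological and controlled function $s\colon X\to[0,\infty)$, and a point $y_0\in Y$. Define $\psi\colon X\to[0,\infty)\times Y$ by $\psi(x):=(s(x),y_0)$ if $x\notin p^{-1}(U)$ and $\psi(x):=(s(x),r(p(x)))$ if $x\in p^{-1}(U)$. Then $\psi\colon X\to\mathcal{O}(Y)$ is a morphism of bornological coarse spaces.
   Context: A bornological coarse space is a set with a coarse structure and compatible bornology; morphisms are controlled (images of entourages are entourages) and proper (preimages of bounded sets are bounded). Let $\ell^\infty_{\mathcal{B}}(X)$ be the $C^*$-algebra of bounded functions $f$ on $X$ such that for every entourage $U$, $\sup\{|f(x)-f(x')|:(x,x')\in U,\ x,x'\notin B\}\to0$ along bounded $B$, and $\ell^\infty(\mathcal{B})$ the ideal of bounded functions with $\sup_{X\setminus B}|f|\to0$ along bounded $B$. A Higson-dominated compactification is given by a closed unital subalgebra $A$ with $\ell^\infty(\mathcal{B})\subseteq A\subseteq\ell^\infty_{\mathcal{B}}(X)$: $\bar X$ is the Gelfand dual of $A$ (a compact Hausdorff space), the boundary $Y$ is the Gelfand dual of $A/\ell^\infty(\mathcal{B})$ (a closed subspace of $\bar X$), and $p\colon X\to\bar X$ sends $x$ to the character $f\mapsto f(x)$. A function $s\colon X\to[0,\infty)$ is proper if preimages of bounded sets are bounded, bornological if images of bounded sets are bounded,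 and controlled if $\sup_{(x,x')\in W}|s(x)-s(x')|<\infty$ for every entourage $W$. $Y$ carries the maximal coarse structure and bornology and the uniform structure of all neighbourhoods of the diagonal. $\mathcal{O}(Y)$ is $[0,\infty)\times Y$ with the bornology whose bounded sets are those contained in $[0,R]\times Y$ for some $R$, and whose entourages are the subsets $U$ of $([0,\infty)\times Y)^2$ with $\sup_{((t,y),(t',y'))\in U}|t-t'|<\infty$ such that for every neighbourhood $V$ of the diagonal of $Y$ there is $S$ with $(y,y')\in V$ whenever $((t,y),(t',y'))\in U$ and $t,t'\ge S$. *)

theory Defs
  imports "HOL-Analysis.Analysis"
begin

text \<open>The bornological coarse space X is the whole type 'a.\<close>

definition coarse_structure :: "('a \<times> 'a) set set \<Rightarrow> bool" where
  "coarse_structure C \<longleftrightarrow> Id \<in> C \<and> (\<forall>U\<in>C. \<forall>V. V \<subseteq> U \<longrightarrow> V \<in> C)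
     \<and> (\<forall>U\<in>C. \<forall>V\<in>C. U \<union> V \<in> C \<and> U O V \<in> C) \<and> (\<forall>U\<in>C. converse U \<in> C)"

definition bornology :: "'a set set \<Rightarrow> bool" where
  "bornology B \<longleftrightarrow> (\<forall>x. \<exists>b\<in>B. x \<in> b) \<and> (\<forall>b\<in>B. \<forall>b'. b' \<subseteq> b \<longrightarrow> b' \<in> B)
     \<and> (\<forall>b\<in>B. \<forall>b'\<in>B. b \<union> b' \<in> B)"

definition bornological_coarse_space :: "('a \<times> 'a) set set \<Rightarrow> 'a set set \<Rightarrow> bool" where
  "bornological_coarse_space C B \<longleftrightarrow> coarse_structure C \<and> bornology B
     \<and> (\<forall>U\<in>C. \<forall>b\<in>B. U `` b \<in> B)"

definition bounded_fun :: "('a \<Rightarrow> complex) \<Rightarrow> bool" where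
  "bounded_fun f \<longleftrightarrow> (\<exists>M. \<forall>x. cmod (f x) \<le> M)"

text \<open>\<open>\<ell>\<^sup>\<infinity>\<^sub>B(X)\<close>: the limit along the directed set of bounded sets is unfolded
  (the sup is antitone in the bounded set).\<close>
definition linfty_higson :: "('a \<times> 'a) set set \<Rightarrow> 'a set set \<Rightarrow> ('a \<Rightarrow> complex) set" where
  "linfty_higson C B = {f. bounded_fun f \<and>
     (\<forall>U\<in>C. \<forall>\<epsilon>>0. \<exists>b\<in>B. \<forall>x x'. (x, x') \<in> U \<and> x \<notin> b \<and> x' \<notin> b \<longrightarrow> cmod (f x - f x') \<le> \<epsilon>)}"

definition linfty_vanish :: "'a set set \<Rightarrow> ('a \<Rightarrow> complex) set" where
  "linfty_vanish B = {f. bounded_fun f \<and> (\<forall>\<epsilon>>0. \<exists>b\<in>B. \<forall>x. x \<notin> b \<longrightarrow> cmod (f x) \<le> \<epsilon>)}"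

definition closed_unital_subalgebra :: "('a \<Rightarrow> complex) set \<Rightarrow> bool" where
  "closed_unital_subalgebra A \<longleftrightarrow> (\<lambda>_. 1) \<in> A
     \<and> (\<forall>f\<in>A. \<forall>g\<in>A. (\<lambda>x. f x + g x) \<in> A \<and> (\<lambda>x. f x * g x) \<in> A)
     \<and> (\<forall>c. \<forall>f\<in>A. (\<lambda>x. c * f x) \<in> A)
     \<and> (\<forall>f\<in>A. (\<lambda>x. cnj (f x)) \<in> A)
     \<and> (\<forall>f. (\<forall>\<epsilon>>0. \<exists>g\<in>A. \<forall>x. cmod (f x - g x) \<le> \<epsilon>) \<longrightarrow> f \<in> A)"

definition higson_dominated :: "('a \<times> 'a) set set \<Rightarrow> 'a set set \<Rightarrow> ('a \<Rightarrow> complex) set \<Rightarrow> bool" where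
  "higson_dominated C B A \<longleftrightarrow> closed_unital_subalgebra A
     \<and> linfty_vanish B \<subseteq> A \<and> A \<subseteq> linfty_higson C B"

text \<open>Gelfand dual: characters of A (extensional outside A) with the weak-* topology.\<close>
definition characters :: "('a \<Rightarrow> complex) set \<Rightarrow> (('a \<Rightarrow> complex) \<Rightarrow> complex) set" where
  "characters A = {\<phi> \<in> PiE A (\<lambda>_. UNIV). \<phi> (\<lambda>_. 1) = 1
     \<and> (\<forall>f\<in>A. \<forall>g\<in>A. \<phi> (\<lambda>x. f x + g x) = \<phi> f + \<phi> g \<and> \<phi> (\<lambda>x. f x * g x) = \<phi> f * \<phi> g)
     \<and> (\<forall>c. \<forall>f\<in>A. \<phi> (\<lambda>x. c * f x) = c * \<phi> f)}"

definition gelfand_top :: "('a \<Rightarrow> complex) set \<Rightarrow> (('a \<Rightarrow> complex) \<Rightarrow> complex) topology" where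
  "gelfand_top A = subtopology (product_topology (\<lambda>_. euclidean) A) (characters A)"

text \<open>Gelfand dual of \<open>A/\<ell>\<^sup>\<infinity>(B)\<close>, as the closed subspace of characters vanishing on the ideal.\<close>
definition boundary :: "('a \<Rightarrow> complex) set \<Rightarrow> 'a set set \<Rightarrow> (('a \<Rightarrow> complex) \<Rightarrow> complex) set" where
  "boundary A B = {\<phi> \<in> characters A. \<forall>f\<in>linfty_vanish B. \<phi> f = 0}"

definition eval_char :: "('a \<Rightarrow> complex) set \<Rightarrow> 'a \<Rightarrow> (('a \<Rightarrow> complex) \<Rightarrow> complex)" where
  "eval_char A x = restrict (\<lambda>f. f x) A"

definition nbhd_in :: "'b topology \<Rightarrow> 'b set \<Rightarrow> 'b set \<Rightarrow> bool" where
  "nbhd_in T S U \<longleftrightarrow> U \<subseteq> topspace T \<and> (\<exists>W. openin T W \<and> S \<subseteq> W \<and> W \<subseteq> U)"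

text \<open>Neighbourhoods of the diagonal of a (compact Hausdorff) space: its uniform structure.\<close>
definition diag_nbhds :: "'b topology \<Rightarrow> ('b \<times> 'b) set set" where
  "diag_nbhds T = {V. nbhd_in (prod_topology T T) (Id_on (topspace T)) V}"

definition cone_carrier :: "'b topology \<Rightarrow> (real \<times> 'b) set" where
  "cone_carrier T = {0..} \<times> topspace T"

definition cone_bornology :: "'b topology \<Rightarrow> (real \<times> 'b) set set" where
  "cone_bornology T = {b. \<exists>R. b \<subseteq> {0..R} \<times> topspace T}"

definition cone_coarse :: "'b topology \<Rightarrow> ((real \<times> 'b) \<times> (real \<times> 'b)) set set" where
  "cone_coarse T = {U. U \<subseteq> cone_carrier T \<times> cone_carrier T
     \<and> (\<exists>c. \<forall>((t, y), (t', y')) \<in> U. \<bar>t - t'\<bar> \<le> c)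
     \<and> (\<forall>V\<in>diag_nbhds T. \<exists>S. \<forall>((t, y), (t', y')) \<in> U. t \<ge> S \<and> t' \<ge> S \<longrightarrow> (y, y') \<in> V)}"

definition bc_morphism :: "('a \<times> 'a) set set \<Rightarrow> 'a set set \<Rightarrow> 'c set \<Rightarrow> ('c \<times> 'c) set set \<Rightarrow> 'c set set
     \<Rightarrow> ('a \<Rightarrow> 'c) \<Rightarrow> bool" where
  "bc_morphism C B Z CZ BZ f \<longleftrightarrow> (\<forall>x. f x \<in> Z)
     \<and> (\<forall>U\<in>C. (\<lambda>(a, b). (f a, f b)) ` U \<in> CZ)
     \<and> (\<forall>b\<in>BZ. f -` b \<in> B)"

definition proper_fun :: "'a set set \<Rightarrow> ('a \<Rightarrow> real) \<Rightarrow> bool" where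
  "proper_fun B s \<longleftrightarrow> (\<forall>R. {x. s x \<le> R} \<in> B)"

definition bornological_fun :: "'a set set \<Rightarrow> ('a \<Rightarrow> real) \<Rightarrow> bool" where
  "bornological_fun B s \<longleftrightarrow> (\<forall>b\<in>B. \<exists>R. \<forall>x\<in>b. s x \<le> R)"

definition controlled_fun :: "('a \<times> 'a) set set \<Rightarrow> ('a \<Rightarrow> real) \<Rightarrow> bool" where
  "controlled_fun C s \<longleftrightarrow> (\<forall>W\<in>C. \<exists>c. \<forall>(x, x') \<in> W. \<bar>s x - s x'\<bar> \<le> c)"

end

theory Submission
  imports Defs
begin

text \<open>Characters of \<open>A\<close> are bounded by the sup norm, so the Gelfand dual is a closed subset
  of a product of discs and hence compact, and so is its square. A point of the square off the
  diagonal of the boundary \<open>Y\<close> is separated either by some \<open>f \<in> A\<close> or, on the diagonal, by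
  some \<open>g\<close> vanishing at infinity; the Higson property of \<open>f\<close>, resp. the decay of \<open>g\<close>, keeps the
  pairs \<open>(p x, p x')\<close> of \<open>W\<close>-close points outside a bounded set away from a neighbourhood of it.
  By compactness finitely many bounded sets suffice, so these pairs eventually lie in every
  neighbourhood of the diagonal of \<open>Y\<close>, in particular in the preimage under \<open>r \<times> r\<close> of one.
  Together with \<open>s\<close> being proper, bornological and controlled this makes \<open>\<psi>\<close> a morphism
  into the cone.\<close>

lemma closed_unital_subalgebraD:
  assumes "closed_unital_subalgebra A"
  shows closed_unital_subalgebra_one: "(\<lambda>_. 1) \<in> A"
    and closed_unital_subalgebra_add: "f \<in> A \<Longrightarrow> g \<in> A \<Longrightarrow> (\<lambda>x. f x + g x) \<in> A"
    and closed_unital_subalgebra_mult: "f \<in> A \<Longrightarrow> g \<in> A \<Longrightarrow> (\<lambda>x. f x * g x) \<in> A"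
    and closed_unital_subalgebra_scaleC: "f \<in> A \<Longrightarrow> (\<lambda>x. c * f x) \<in> A"
    and closed_unital_subalgebra_uniform_limit:
      "(\<And>\<epsilon>. \<epsilon> > 0 \<Longrightarrow> \<exists>g\<in>A. \<forall>x. cmod (f x - g x) \<le> \<epsilon>) \<Longrightarrow> f \<in> A"
  using assms unfolding closed_unital_subalgebra_def by blast+

lemma closed_unital_subalgebra_const:
  assumes "closed_unital_subalgebra A" shows "(\<lambda>_. c) \<in> A"
  using closed_unital_subalgebra_scaleC[OF assms closed_unital_subalgebra_one[OF assms], of c]
  by simp

lemma closed_unital_subalgebra_diff:
  assumes "closed_unital_subalgebra A" "f \<in> A" "g \<in> A"
  shows "(\<lambda>x. f x - g x) \<in> A"
  using closed_unital_subalgebra_add[OF assms(1,2) closed_unital_subalgebra_scaleC[OF assms(1,3)],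
      of "- 1"]
  by simp

lemma closed_unital_subalgebra_power:
  assumes "closed_unital_subalgebra A" "f \<in> A"
  shows "(\<lambda>x. f x ^ n) \<in> A"
  by (induction n)
    (simp_all add: assms closed_unital_subalgebra_const closed_unital_subalgebra_mult)

lemma closed_unital_subalgebra_sum:
  assumes "closed_unital_subalgebra A" "finite I" "\<And>i. i \<in> I \<Longrightarrow> f i \<in> A"
  shows "(\<lambda>x. \<Sum>i\<in>I. f i x) \<in> A"
  using assms(2,3)
  by (induction I rule: finite_induct)
    (simp_all add: assms(1) closed_unital_subalgebra_const closed_unital_subalgebra_add)

lemma closed_unital_subalgebra_inverse_one_minus:
  assumes A: "closed_unital_subalgebra A" and f: "f \<in> A"
    and bound: "\<forall>x. cmod (f x) \<le> \<rho>" and "\<rho> < 1"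
  shows "(\<lambda>x. 1 / (1 - f x)) \<in> A"
proof (rule closed_unital_subalgebra_uniform_limit[OF A])
  have "0 \<le> \<rho>" using bound norm_ge_zero order_trans by blast
  have partial_sum_in: "(\<lambda>x. \<Sum>i<n. f x ^ i) \<in> A" for n
    by (intro closed_unital_subalgebra_sum closed_unital_subalgebra_power A f) simp
  have error: "cmod (1 / (1 - f x) - (\<Sum>i<n. f x ^ i)) \<le> \<rho> ^ n / (1 - \<rho>)" for x n
  proof -
    have "1 - \<rho> \<le> cmod (1 - f x)"
      using bound norm_triangle_ineq2[of 1 "f x"] by (smt (verit) norm_one)
    moreover have "f x \<noteq> 1" using bound \<open>\<rho> < 1\<close> by (metis norm_one not_le)
    ultimately have "1 / (1 - f x) - (\<Sum>i<n. f x ^ i) = f x ^ n / (1 - f x)"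
      by (simp add: sum_gp_strict diff_divide_distrib)
    moreover have "cmod (f x ^ n) \<le> \<rho> ^ n"
      by (simp add: norm_power power_mono bound)
    ultimately show ?thesis
      using \<open>1 - \<rho> \<le> cmod (1 - f x)\<close> \<open>\<rho> < 1\<close> \<open>0 \<le> \<rho>\<close>
      by (simp add: norm_divide frac_le)
  qed
  fix \<epsilon> :: real assume "\<epsilon> > 0"
  then obtain n where "\<rho> ^ n < \<epsilon> * (1 - \<rho>)"
    using real_arch_pow_inv[of "\<epsilon> * (1 - \<rho>)" \<rho>] \<open>0 \<le> \<rho>\<close> \<open>\<rho> < 1\<close> by force
  then have "\<rho> ^ n / (1 - \<rho>) \<le> \<epsilon>" using \<open>\<rho> < 1\<close> by (simp add: divide_le_eq)
  then show "\<exists>g\<in>A. \<forall>x. cmod (1 / (1 - f x) - g x) \<le> \<epsilon>"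
    using error partial_sum_in by (meson order_trans)
qed

lemma charactersD:
  assumes "\<phi> \<in> characters A"
  shows character_one: "\<phi> (\<lambda>_. 1) = 1"
    and character_add: "f \<in> A \<Longrightarrow> g \<in> A \<Longrightarrow> \<phi> (\<lambda>x. f x + g x) = \<phi> f + \<phi> g"
    and character_mult: "f \<in> A \<Longrightarrow> g \<in> A \<Longrightarrow> \<phi> (\<lambda>x. f x * g x) = \<phi> f * \<phi> g"
    and character_scaleC: "f \<in> A \<Longrightarrow> \<phi> (\<lambda>x. c * f x) = c * \<phi> f"
  using assms unfolding characters_def by blast+

lemma character_diff:
  assumes "closed_unital_subalgebra A" "\<phi> \<in> characters A" "f \<in> A" "g \<in> A"
  shows "\<phi> (\<lambda>x. f x - g x) = \<phi> f - \<phi> g"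
  using character_add[OF assms(2,3) closed_unital_subalgebra_scaleC[OF assms(1,4)], of "- 1"]
    character_scaleC[OF assms(2,4), of "- 1"]
  by simp

text \<open>If \<open>\<bar>\<phi> f\<bar>\<close> exceeded \<open>sup \<bar>f\<bar>\<close>, then \<open>1 - f / \<phi> f\<close> would be invertible in \<open>A\<close>
  by a Neumann series, yet killed by \<open>\<phi>\<close>.\<close>
lemma character_norm_le:
  assumes A: "closed_unital_subalgebra A" and \<phi>: "\<phi> \<in> characters A" and f: "f \<in> A"
    and bound: "\<forall>x. cmod (f x) \<le> M"
  shows "cmod (\<phi> f) \<le> M"
proof (rule ccontr)
  assume "\<not> cmod (\<phi> f) \<le> M"
  then have "M < cmod (\<phi> f)" by simp
  moreover have "0 \<le> M" using bound norm_ge_zero order_trans by blast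
  ultimately have "\<phi> f \<noteq> 0" by auto
  define q where "q x = inverse (\<phi> f) * f x" for x
  have q: "q \<in> A" "\<phi> q = 1"
    using closed_unital_subalgebra_scaleC[OF A f] character_scaleC[OF \<phi> f] \<open>\<phi> f \<noteq> 0\<close>
    by (simp_all add: q_def[abs_def])
  have "cmod (q x) = cmod (f x) / cmod (\<phi> f)" for x
    by (simp add: q_def norm_mult norm_inverse divide_inverse_commute)
  then have q_bound: "\<forall>x. cmod (q x) \<le> M / cmod (\<phi> f)"
    using bound by (simp add: divide_right_mono)
  have "M / cmod (\<phi> f) < 1" using \<open>M < cmod (\<phi> f)\<close> \<open>0 \<le> M\<close> by (simp add: divide_less_eq)
  then have inv: "(\<lambda>x. 1 / (1 - q x)) \<in> A"
    using closed_unital_subalgebra_inverse_one_minus[OF A q(1) q_bound] by blast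
  have one_minus_q: "(\<lambda>x. 1 - q x) \<in> A" "\<phi> (\<lambda>x. 1 - q x) = 0"
    using closed_unital_subalgebra_diff[OF A closed_unital_subalgebra_one[OF A] q(1)]
      character_diff[OF A \<phi> closed_unital_subalgebra_one[OF A] q(1)] character_one[OF \<phi>] q(2)
    by simp_all
  have "q x \<noteq> 1" for x
    using q_bound \<open>M / cmod (\<phi> f) < 1\<close> by (metis norm_one not_le)
  then have "(\<lambda>x. (1 - q x) * (1 / (1 - q x))) = (\<lambda>_. 1)"
    by (simp add: fun_eq_iff)
  then have "\<phi> (\<lambda>_. 1) = 0"
    using character_mult[OF \<phi> one_minus_q(1) inv] one_minus_q(2) by simp
  then show False using character_one[OF \<phi>] by simp
qed

lemma topspace_gelfand_top: "topspace (gelfand_top A) = characters A"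
  unfolding gelfand_top_def characters_def by auto

lemma continuous_map_gelfand_eval:
  "f \<in> A \<Longrightarrow> continuous_map (gelfand_top A) euclidean (\<lambda>\<phi>. \<phi> f)"
  unfolding gelfand_top_def
  by (rule continuous_map_from_subtopology[OF continuous_map_product_projection])

lemma eval_char_apply: "f \<in> A \<Longrightarrow> eval_char A x f = f x"
  by (simp add: eval_char_def)

lemma eval_char_in_characters:
  "closed_unital_subalgebra A \<Longrightarrow> eval_char A x \<in> characters A"
  by (simp add: characters_def eval_char_def closed_unital_subalgebraD)

lemma continuous_map_mult:
  fixes f g :: "'a \<Rightarrow> 'b::real_normed_algebra"
  shows "continuous_map X euclidean f \<Longrightarrow> continuous_map X euclidean g
    \<Longrightarrow> continuous_map X euclidean (\<lambda>x. f x * g x)"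
  by (simp add: continuous_map_atin tendsto_mult)

lemma compact_space_gelfand_top:
  assumes A: "closed_unital_subalgebra A" and bounded: "\<forall>f\<in>A. bounded_fun f"
  shows "compact_space (gelfand_top A)"
proof -
  let ?P = "product_topology (\<lambda>_. euclidean) A :: (('a \<Rightarrow> complex) \<Rightarrow> complex) topology"
  obtain sup_norm where sup_norm: "\<And>f x. f \<in> A \<Longrightarrow> cmod (f x) \<le> sup_norm f"
    using bounded unfolding bounded_fun_def by metis
  have "characters A \<subseteq> PiE A (\<lambda>f. cball 0 (sup_norm f))"
  proof
    fix \<phi> assume \<phi>: "\<phi> \<in> characters A"
    then have "\<phi> \<in> extensional A" by (simp add: characters_def PiE_def)
    then show "\<phi> \<in> PiE A (\<lambda>f. cball 0 (sup_norm f))"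
      using character_norm_le[OF A \<phi>] sup_norm by (simp add: PiE_iff)
  qed
  moreover have "compactin ?P (PiE A (\<lambda>f. cball 0 (sup_norm f)))"
    by (simp add: compactin_PiE)
  moreover have "closedin ?P (characters A)"
  proof -
    have eval: "continuous_map ?P euclidean (\<lambda>\<phi>. \<phi> f)" if "f \<in> A" for f
      using continuous_map_product_projection[OF that] .
    have "A \<noteq> {}" using closed_unital_subalgebra_one[OF A] by blast
    have "characters A = {\<phi> \<in> topspace ?P. \<phi> (\<lambda>_. 1) = 1}
       \<inter> (\<Inter>f\<in>A. \<Inter>g\<in>A. {\<phi> \<in> topspace ?P. \<phi> (\<lambda>x. f x + g x) = \<phi> f + \<phi> g})
       \<inter> (\<Inter>f\<in>A. \<Inter>g\<in>A. {\<phi> \<in> topspace ?P. \<phi> (\<lambda>x. f x * g x) = \<phi> f * \<phi> g})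
       \<inter> (\<Inter>c. \<Inter>f\<in>A. {\<phi> \<in> topspace ?P. \<phi> (\<lambda>x. c * f x) = c * \<phi> f})"
      using \<open>A \<noteq> {}\<close> unfolding characters_def by auto
    then show ?thesis
      by (simp only:) (intro closedin_Int closedin_INT \<open>A \<noteq> {}\<close> UNIV_not_empty
          closedin_continuous_maps_eq[OF Hausdorff_space_euclidean] eval continuous_map_add
          continuous_map_mult continuous_map_canonical_const closed_unital_subalgebra_one[OF A]
          closed_unital_subalgebra_add[OF A] closed_unital_subalgebra_mult[OF A]
          closed_unital_subalgebra_scaleC[OF A])
  qed
  ultimately have "compactin ?P (characters A)" by (metis closed_compactin)
  then show ?thesis
    unfolding compact_space_def topspace_gelfand_top unfolding gelfand_top_def compactin_subtopology
    by simp
qed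

lemma bornology_finite_choice:
  assumes "bornology B" "finite F" "\<forall>N\<in>F. \<exists>b\<in>B. Q N b"
    and mono: "\<And>N b b'. b \<subseteq> b' \<Longrightarrow> Q N b \<Longrightarrow> Q N b'"
  shows "\<exists>b\<in>B. \<forall>N\<in>F. Q N b"
  using assms(2,3)
proof (induction F rule: finite_induct)
  case empty
  then show ?case using assms(1) unfolding bornology_def by blast
next
  case (insert N F)
  then obtain b1 b2 where "b1 \<in> B" "Q N b1" "b2 \<in> B" "\<forall>N\<in>F. Q N b2" by auto
  moreover have "b1 \<union> b2 \<in> B" using assms(1) \<open>b1 \<in> B\<close> \<open>b2 \<in> B\<close> unfolding bornology_def by blast
  ultimately show ?case using mono by (metis Un_upper1 Un_upper2 insert_iff)
qed

lemma compactin_bornology_choice: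
  assumes "bornology B" "compactin X K"
    and cover: "\<forall>z\<in>K. \<exists>N. openin X N \<and> z \<in> N \<and> (\<exists>b\<in>B. Q N b)"
    and mono: "\<And>N b b'. b \<subseteq> b' \<Longrightarrow> Q N b \<Longrightarrow> Q N b'"
  shows "\<exists>b\<in>B. \<exists>F. K \<subseteq> \<Union>F \<and> (\<forall>N\<in>F. Q N b)"
proof -
  have "K \<subseteq> \<Union>{N. openin X N \<and> (\<exists>b\<in>B. Q N b)}" using cover by blast
  then obtain F where F: "finite F" "F \<subseteq> {N. openin X N \<and> (\<exists>b\<in>B. Q N b)}" "K \<subseteq> \<Union>F"
    using \<open>compactin X K\<close> unfolding compactin_def by (metis (no_types, lifting) mem_Collect_eq)
  then have "\<forall>N\<in>F. \<exists>b\<in>B. Q N b" by blast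
  then have "\<exists>b\<in>B. \<forall>N\<in>F. Q N b"
    by (rule bornology_finite_choice[OF \<open>bornology B\<close> \<open>finite F\<close>]) (rule mono)
  then show ?thesis using F(3) by blast
qed

lemma continuous_map_gelfand_eval_fst:
  "f \<in> A \<Longrightarrow> continuous_map (prod_topology (gelfand_top A) X) euclidean (\<lambda>z. fst z f)"
  using continuous_map_compose[OF continuous_map_fst continuous_map_gelfand_eval] by (simp add: o_def)

lemma continuous_map_gelfand_eval_snd:
  "f \<in> A \<Longrightarrow> continuous_map (prod_topology X (gelfand_top A)) euclidean (\<lambda>z. snd z f)"
  using continuous_map_compose[OF continuous_map_snd continuous_map_gelfand_eval] by (simp add: o_def)

lemma eval_char_pairs_avoid_nbhd:
  assumes hd: "higson_dominated C B A" and W: "W \<in> C"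
    and \<phi>: "\<phi> \<in> characters A" and \<phi>': "\<phi>' \<in> characters A"
    and off_diagonal: "\<not> (\<phi> = \<phi>' \<and> \<phi> \<in> boundary A B)"
  shows "\<exists>N. openin (prod_topology (gelfand_top A) (gelfand_top A)) N \<and> (\<phi>, \<phi>') \<in> N \<and>
           (\<exists>b\<in>B. \<forall>x x'. (x, x') \<in> W \<and> x \<notin> b \<and> x' \<notin> b \<longrightarrow> (eval_char A x, eval_char A x') \<notin> N)"
proof -
  let ?PP = "prod_topology (gelfand_top A) (gelfand_top A)"
  have vanish: "linfty_vanish B \<subseteq> A" and higson: "A \<subseteq> linfty_higson C B"
    using hd unfolding higson_dominated_def by blast+
  have open_gt: "openin ?PP {z \<in> topspace ?PP. d < h z}"
    if "continuous_map ?PP euclidean h" for h and d :: real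
    using openin_continuous_map_preimage[OF that, of "{d<..}"] by simp
  consider (distinct) "\<phi> \<noteq> \<phi>'" | (interior) "\<phi> = \<phi>'" "\<phi> \<notin> boundary A B"
    using off_diagonal by blast
  then show ?thesis
  proof cases
    case distinct
    moreover have "\<phi> \<in> PiE A (\<lambda>_. UNIV)" "\<phi>' \<in> PiE A (\<lambda>_. UNIV)"
      using \<phi> \<phi>' unfolding characters_def by blast+
    ultimately obtain f where f: "f \<in> A" "\<phi> f \<noteq> \<phi>' f" by (metis PiE_ext)
    define d where "d = cmod (\<phi> f - \<phi>' f) / 2"
    define N where "N = {z \<in> topspace ?PP. d < cmod (fst z f - snd z f)}"
    have "openin ?PP N" unfolding N_def
      by (intro open_gt continuous_map_norm continuous_map_diff f(1)
          continuous_map_gelfand_eval_fst continuous_map_gelfand_eval_snd)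
    moreover have "(\<phi>, \<phi>') \<in> N" using f(2) \<phi> \<phi>' by (simp add: N_def d_def topspace_gelfand_top)
    moreover have "f \<in> linfty_higson C B" "d > 0" using higson f by (auto simp: d_def)
    then obtain b where "b \<in> B"
      and "\<forall>x x'. (x, x') \<in> W \<and> x \<notin> b \<and> x' \<notin> b \<longrightarrow> cmod (f x - f x') \<le> d"
      using W unfolding linfty_higson_def mem_Collect_eq by blast
    then have "\<exists>b\<in>B. \<forall>x x'. (x, x') \<in> W \<and> x \<notin> b \<and> x' \<notin> b \<longrightarrow> (eval_char A x, eval_char A x') \<notin> N"
      by (auto simp: N_def eval_char_apply[OF f(1)] not_less intro!: bexI[of _ b])
    ultimately show ?thesis by blast
  next
    case interior
    then obtain g where g: "g \<in> linfty_vanish B" "\<phi> g \<noteq> 0"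
      using \<phi> unfolding boundary_def by blast
    define d where "d = cmod (\<phi> g) / 2"
    define N where "N = {z \<in> topspace ?PP. d < cmod (fst z g)}"
    have "openin ?PP N" unfolding N_def
      using vanish g(1) by (intro open_gt continuous_map_norm continuous_map_gelfand_eval_fst) blast
    moreover have "(\<phi>, \<phi>') \<in> N" using g(2) \<phi> \<phi>' by (simp add: N_def d_def topspace_gelfand_top)
    moreover have "d > 0" using g(2) by (simp add: d_def)
    then obtain b where "b \<in> B" and "\<forall>x. x \<notin> b \<longrightarrow> cmod (g x) \<le> d"
      using g(1) unfolding linfty_vanish_def mem_Collect_eq by blast
    then have "\<exists>b\<in>B. \<forall>x x'. (x, x') \<in> W \<and> x \<notin> b \<and> x' \<notin> b \<longrightarrow> (eval_char A x, eval_char A x') \<notin> N"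
      using vanish g(1) by (auto simp: N_def eval_char_apply not_less intro!: bexI[of _ b])
    ultimately show ?thesis by blast
  qed
qed

lemma eval_char_pairs_eventually_in_nbhd:
  assumes "bornology B" and hd: "higson_dominated C B A" and W: "W \<in> C"
    and G: "openin (prod_topology (gelfand_top A) (gelfand_top A)) G"
    and diagonal: "\<forall>\<phi>\<in>boundary A B. (\<phi>, \<phi>) \<in> G"
  shows "\<exists>b\<in>B. \<forall>x x'. (x, x') \<in> W \<and> x \<notin> b \<and> x' \<notin> b \<longrightarrow> (eval_char A x, eval_char A x') \<in> G"
proof -
  let ?PP = "prod_topology (gelfand_top A) (gelfand_top A)"
  let ?avoids = "\<lambda>N b. \<forall>x x'. (x, x') \<in> W \<and> x \<notin> b \<and> x' \<notin> b \<longrightarrow> (eval_char A x, eval_char A x') \<notin> N"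
  have A: "closed_unital_subalgebra A" and "\<forall>f\<in>A. bounded_fun f"
    using hd unfolding higson_dominated_def linfty_higson_def by auto
  then have "compact_space ?PP"
    by (simp add: compact_space_gelfand_top compact_space_prod_topology)
  moreover have "closedin ?PP (topspace ?PP - G)" by (rule closedin_diff[OF closedin_topspace G])
  ultimately have "compactin ?PP (topspace ?PP - G)"
    using closed_compactin[of ?PP "topspace ?PP"] unfolding compact_space_def by blast
  moreover have "\<forall>z\<in>topspace ?PP - G. \<exists>N. openin ?PP N \<and> z \<in> N \<and> (\<exists>b\<in>B. ?avoids N b)"
  proof
    fix z assume z: "z \<in> topspace ?PP - G"
    then obtain \<phi> \<phi>' where z_eq: "z = (\<phi>, \<phi>')"
      and \<phi>: "\<phi> \<in> characters A" and \<phi>': "\<phi>' \<in> characters A"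
      by (auto simp: topspace_gelfand_top)
    have "\<not> (\<phi> = \<phi>' \<and> \<phi> \<in> boundary A B)" using z diagonal z_eq by blast
    from eval_char_pairs_avoid_nbhd[OF hd W \<phi> \<phi>' this]
    show "\<exists>N. openin ?PP N \<and> z \<in> N \<and> (\<exists>b\<in>B. ?avoids N b)" unfolding z_eq .
  qed
  moreover have "\<And>N b b'. b \<subseteq> b' \<Longrightarrow> ?avoids N b \<Longrightarrow> ?avoids N b'" by blast
  ultimately have "\<exists>b\<in>B. \<exists>F. topspace ?PP - G \<subseteq> \<Union>F \<and> (\<forall>N\<in>F. ?avoids N b)"
    by (rule compactin_bornology_choice[OF \<open>bornology B\<close>])
  then obtain b F where "b \<in> B" and cover: "topspace ?PP - G \<subseteq> \<Union>F"
    and b: "\<forall>N\<in>F. ?avoids N b"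
    by (elim bexE exE conjE) (rule that)
  have "(eval_char A x, eval_char A x') \<in> G" if "(x, x') \<in> W \<and> x \<notin> b \<and> x' \<notin> b" for x x'
  proof -
    have "(eval_char A x, eval_char A x') \<in> topspace ?PP"
      by (simp add: topspace_gelfand_top eval_char_in_characters[OF A])
    then show ?thesis using cover b that by blast
  qed
  then show ?thesis using \<open>b \<in> B\<close> by blast
qed

lemma bc_morphism_into_cone:
  assumes "bornology B" and "\<forall>x. s x \<ge> 0" and proper: "proper_fun B s"
    and bornological: "bornological_fun B s" and controlled: "controlled_fun C s"
    and q: "\<forall>x. q x \<in> topspace T"
    and close: "\<And>W V. W \<in> C \<Longrightarrow> V \<in> diag_nbhds T \<Longrightarrow>
      \<exists>b\<in>B. \<forall>x x'. (x, x') \<in> W \<and> x \<notin> b \<and> x' \<notin> b \<longrightarrow> (q x, q x') \<in> V"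
  shows "bc_morphism C B (cone_carrier T) (cone_coarse T) (cone_bornology T) (\<lambda>x. (s x, q x))"
  unfolding bc_morphism_def
proof (intro conjI allI ballI)
  show carrier: "(s x, q x) \<in> cone_carrier T" for x
    using assms(2) q by (simp add: cone_carrier_def)
  fix W assume W: "W \<in> C"
  show "(\<lambda>(a, b). ((s a, q a), (s b, q b))) ` W \<in> cone_coarse T"
    unfolding cone_coarse_def mem_Collect_eq
  proof (intro conjI)
    show "(\<lambda>(a, b). ((s a, q a), (s b, q b))) ` W \<subseteq> cone_carrier T \<times> cone_carrier T"
      using carrier by auto
    obtain c where "\<forall>(x, x') \<in> W. \<bar>s x - s x'\<bar> \<le> c"
      using controlled W unfolding controlled_fun_def by blast
    then show "\<exists>c. \<forall>((t, y), (t', y')) \<in> (\<lambda>(a, b). ((s a, q a), (s b, q b))) ` W. \<bar>t - t'\<bar> \<le> c"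
      by auto
    show "\<forall>V\<in>diag_nbhds T. \<exists>S. \<forall>((t, y), (t', y')) \<in> (\<lambda>(a, b). ((s a, q a), (s b, q b))) ` W.
            S \<le> t \<and> S \<le> t' \<longrightarrow> (y, y') \<in> V"
    proof
      fix V assume "V \<in> diag_nbhds T"
      then obtain b where "b \<in> B"
        and b: "\<forall>x x'. (x, x') \<in> W \<and> x \<notin> b \<and> x' \<notin> b \<longrightarrow> (q x, q x') \<in> V"
        using close W by blast
      then obtain R where "\<forall>x\<in>b. s x \<le> R"
        using bornological unfolding bornological_fun_def by blast
      then have "\<forall>((t, y), (t', y')) \<in> (\<lambda>(a, b). ((s a, q a), (s b, q b))) ` W.
            R + 1 \<le> t \<and> R + 1 \<le> t' \<longrightarrow> (y, y') \<in> V"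
        using b by fastforce
      then show "\<exists>S. \<forall>((t, y), (t', y')) \<in> (\<lambda>(a, b). ((s a, q a), (s b, q b))) ` W.
            S \<le> t \<and> S \<le> t' \<longrightarrow> (y, y') \<in> V" by blast
    qed
  qed
next
  fix b assume "b \<in> cone_bornology T"
  then obtain R where "b \<subseteq> {0..R} \<times> topspace T" unfolding cone_bornology_def by blast
  then have "(\<lambda>x. (s x, q x)) -` b \<subseteq> {x. s x \<le> R}" by auto
  moreover have "{x. s x \<le> R} \<in> B" using proper unfolding proper_fun_def by blast
  ultimately show "(\<lambda>x. (s x, q x)) -` b \<in> B"
    using \<open>bornology B\<close> unfolding bornology_def by blast
qed

lemma openin_pairs_mapped_into:
  assumes r: "continuous_map (subtopology X U) Y r" and S: "openin X S" "S \<subseteq> U"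
    and V: "openin (prod_topology Y Y) V"
  shows "openin (prod_topology X X)
    {z \<in> topspace (prod_topology X X). fst z \<in> S \<and> snd z \<in> S \<and> (r (fst z), r (snd z)) \<in> V}"
proof -
  let ?XX = "subtopology (prod_topology X X) (S \<times> S)"
  have rS: "continuous_map (subtopology X S) Y r"
    by (rule continuous_map_from_subtopology_mono[OF r S(2)])
  have "continuous_map ?XX (prod_topology Y Y) (\<lambda>z. (r (fst z), r (snd z)))"
    unfolding subtopology_Times continuous_map_paired
    using continuous_map_compose[OF continuous_map_fst rS] continuous_map_compose[OF continuous_map_snd rS]
    by (simp add: o_def) blast
  from openin_continuous_map_preimage[OF this V]
  have "openin ?XX {z \<in> topspace ?XX. (r (fst z), r (snd z)) \<in> V}" .
  moreover have "openin (prod_topology X X) (S \<times> S)" by (simp add: openin_prod_Times_iff S(1))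
  ultimately have "openin (prod_topology X X) {z \<in> topspace ?XX. (r (fst z), r (snd z)) \<in> V}"
    by (rule openin_trans_full)
  moreover have "{z \<in> topspace ?XX. (r (fst z), r (snd z)) \<in> V}
      = {z \<in> topspace (prod_topology X X). fst z \<in> S \<and> snd z \<in> S \<and> (r (fst z), r (snd z)) \<in> V}"
    by auto
  ultimately show ?thesis by simp
qed

lemma topspace_boundary: "topspace (subtopology (gelfand_top A) (boundary A B)) = boundary A B"
  by (auto simp: topspace_gelfand_top boundary_def)

lemma retraction_eventually_close:
  assumes "bornology B" and hd: "higson_dominated C B A"
    and U: "nbhd_in (gelfand_top A) (boundary A B) U"
    and r: "continuous_map (subtopology (gelfand_top A) U) (subtopology (gelfand_top A) (boundary A B)) r"
    and retraction: "\<forall>y\<in>boundary A B. r y = y"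
    and W: "W \<in> C" and V: "V \<in> diag_nbhds (subtopology (gelfand_top A) (boundary A B))"
  shows "\<exists>b\<in>B. \<forall>x x'. (x, x') \<in> W \<and> x \<notin> b \<and> x' \<notin> b \<longrightarrow>
           eval_char A x \<in> U \<and> eval_char A x' \<in> U \<and> (r (eval_char A x), r (eval_char A x')) \<in> V"
proof -
  let ?T = "gelfand_top A" and ?Y = "boundary A B"
  obtain V0 where V0: "openin (prod_topology (subtopology ?T ?Y) (subtopology ?T ?Y)) V0"
    and "Id_on ?Y \<subseteq> V0" "V0 \<subseteq> V"
    using V unfolding diag_nbhds_def nbhd_in_def topspace_boundary by blast
  obtain S where S: "openin ?T S" "?Y \<subseteq> S" "S \<subseteq> U"
    using U unfolding nbhd_in_def by blast
  define G where "G = {z \<in> topspace (prod_topology ?T ?T).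
    fst z \<in> S \<and> snd z \<in> S \<and> (r (fst z), r (snd z)) \<in> V0}"
  have "openin (prod_topology ?T ?T) G"
    unfolding G_def using openin_pairs_mapped_into[OF r S(1,3) V0] .
  moreover have "\<forall>\<phi>\<in>?Y. (\<phi>, \<phi>) \<in> G"
    using S(2) retraction \<open>Id_on ?Y \<subseteq> V0\<close>
    by (auto simp: G_def topspace_gelfand_top boundary_def)
  ultimately obtain b where "b \<in> B"
    and b: "\<forall>x x'. (x, x') \<in> W \<and> x \<notin> b \<and> x' \<notin> b \<longrightarrow> (eval_char A x, eval_char A x') \<in> G"
    by (metis eval_char_pairs_eventually_in_nbhd[OF \<open>bornology B\<close> hd W])
  have "eval_char A x \<in> U \<and> eval_char A x' \<in> U \<and> (r (eval_char A x), r (eval_char A x')) \<in> V"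
    if "(x, x') \<in> W \<and> x \<notin> b \<and> x' \<notin> b" for x x'
    using b that S(3) \<open>V0 \<subseteq> V\<close> unfolding G_def by auto
  then show ?thesis using \<open>b \<in> B\<close> by blast
qed

theorem lemma3p21:
  fixes C :: "('a \<times> 'a) set set" and B :: "'a set set"
    and A :: "('a \<Rightarrow> complex) set"
    and U :: "(('a \<Rightarrow> complex) \<Rightarrow> complex) set"
    and r :: "(('a \<Rightarrow> complex) \<Rightarrow> complex) \<Rightarrow> (('a \<Rightarrow> complex) \<Rightarrow> complex)"
    and s :: "'a \<Rightarrow> real"
    and y0 :: "('a \<Rightarrow> complex) \<Rightarrow> complex"
  assumes "bornological_coarse_space C B"
    and "higson_dominated C B A"
    and "nbhd_in (gelfand_top A) (boundary A B) U"
    and "continuous_map (subtopology (gelfand_top A) U) (subtopology (gelfand_top A) (boundary A B)) r"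
    and "\<forall>y\<in>boundary A B. r y = y"
    and "\<forall>x. s x \<ge> 0"
    and "proper_fun B s" and "bornological_fun B s" and "controlled_fun C s"
    and "y0 \<in> boundary A B"
  shows "bc_morphism C B
           (cone_carrier (subtopology (gelfand_top A) (boundary A B)))
           (cone_coarse (subtopology (gelfand_top A) (boundary A B)))
           (cone_bornology (subtopology (gelfand_top A) (boundary A B)))
           (\<lambda>x. if eval_char A x \<in> U then (s x, r (eval_char A x)) else (s x, y0))"
proof -
  let ?TY = "subtopology (gelfand_top A) (boundary A B)"
  define q where "q x = (if eval_char A x \<in> U then r (eval_char A x) else y0)" for x
  have "bornology B" using assms(1) unfolding bornological_coarse_space_def by blast
  have "r ` U \<subseteq> boundary A B"
    using continuous_map_image_subset_topspace[OF assms(4)] assms(3)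
    unfolding topspace_boundary by (simp add: nbhd_in_def Int_absorb1)
  then have "\<forall>x. q x \<in> topspace ?TY"
    using assms(10) unfolding topspace_boundary by (auto simp: q_def)
  moreover have "\<exists>b\<in>B. \<forall>x x'. (x, x') \<in> W \<and> x \<notin> b \<and> x' \<notin> b \<longrightarrow> (q x, q x') \<in> V"
    if WV: "W \<in> C" "V \<in> diag_nbhds ?TY" for W V
  proof -
    obtain b where "b \<in> B" and "\<forall>x x'. (x, x') \<in> W \<and> x \<notin> b \<and> x' \<notin> b \<longrightarrow>
        eval_char A x \<in> U \<and> eval_char A x' \<in> U \<and> (r (eval_char A x), r (eval_char A x')) \<in> V"
      using retraction_eventually_close[OF \<open>bornology B\<close> assms(2-5) WV] by blast
    then show ?thesis by (intro bexI[of _ b]) (auto simp: q_def)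
  qed
  ultimately have "bc_morphism C B (cone_carrier ?TY) (cone_coarse ?TY) (cone_bornology ?TY)
      (\<lambda>x. (s x, q x))"
    using bc_morphism_into_cone[OF \<open>bornology B\<close> assms(6-9)] by blast
  moreover have "(\<lambda>x. (s x, q x)) = (\<lambda>x. if eval_char A x \<in> U then (s x, r (eval_char A x)) else (s x, y0))"
    by (simp add: q_def fun_eq_iff)
  ultimately show ?thesis by simp
qed

end
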